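(* Consider the system of ODEs $$\frac{dx_j}{dt}=\gamma(\underline{x})\,\nu_0(\underline{x})\,(\hat x_j-x_j),\qquad j=1,\dots,J,$$ in the linear case, i.e. where $\hat x_j=\nu_j/\nu_0$ are constants for $j=1,\dots,J$. For $j_1,j_2\in\{1,\dots,J\}$ define the $(j_1,j_2)$-density $\rho_{j_1,j_2}(t)=x_{j_1}(t)/x_{j_2}(t)$ and the $(j_1,j_2)$-fixed point ratio $\phi_{j_1,j_2}=\nu_{j_1}/\nu_{j_2}$ (constant in this case). Then along any solution, $\rho_{j_1,j_2}(t)$ changes monotonically in $t$.
   Context: Here $\gamma(\underline{x})>0$ is the cumulative clock function and $\nu_j$ is the expected increment of the counting variable $X_j$ per micro-event; $x_j=X_j/X_0$. *)

theory Defs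
  imports "HOL-Analysis.Analysis"
begin

definition density :: "(real \<Rightarrow> nat \<Rightarrow> real) \<Rightarrow> nat \<Rightarrow> nat \<Rightarrow> real \<Rightarrow> real" where
  "density x j1 j2 t = x t j1 / x t j2"

end

theory Submission
  imports Defs
begin

text \<open>With \<open>k = \<gamma> \<nu>\<^sub>0 > 0\<close>, the cross term
  \<open>w = xhat j1 * x j2 - xhat j2 * x j1\<close> satisfies \<open>w' = - k w\<close>, while the density
  \<open>x j1 / x j2\<close> has derivative \<open>k w / (x j2)\<^sup>2\<close>. As \<open>w w' \<le> 0\<close>, the square
  \<open>w\<^sup>2\<close> is nonincreasing, so once \<open>w\<close> vanishes it stays zero. A sign change of the
  continuous \<open>w\<close> would produce a zero before a point where \<open>w \<noteq> 0\<close>; hence \<open>w\<close>,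
  and with it the derivative of the density, has constant sign.\<close>

lemma atLeastAtMost_subset_if_is_interval:
  fixes a b :: real
  assumes "is_interval T" "a \<in> T" "b \<in> T"
  shows "{a..b} \<subseteq> T"
  using mem_is_interval_1_I[OF assms] by (simp add: subset_iff)

lemma mono_on_if_has_real_derivative_nonneg:
  fixes f f' :: "real \<Rightarrow> real"
  assumes "is_interval T"
    and deriv: "\<And>t. t \<in> T \<Longrightarrow> (f has_real_derivative f' t) (at t within T)"
    and nonneg: "\<And>t. t \<in> T \<Longrightarrow> f' t \<ge> 0"
  shows "mono_on T f"
proof (rule mono_onI)
  fix s t assume st: "s \<in> T" "t \<in> T" "s \<le> t"
  have sub: "{s..t} \<subseteq> T"
    by (rule atLeastAtMost_subset_if_is_interval[OF \<open>is_interval T\<close> st(1,2)])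
  have "(f has_real_derivative f' u) (at u within {s..t})" if "u \<in> {s..t}" for u
    using deriv sub that by (blast intro: DERIV_subset)
  then obtain u where u: "u \<in> {s..t}" "f t - f s = f' u * (t - s)"
    using mvt_very_simple[OF st(3), of f "\<lambda>u h. f' u * h"]
    unfolding has_field_derivative_def by auto
  have "0 \<le> f' u * (t - s)"
    using u sub nonneg[of u] st(3) by auto
  then show "f s \<le> f t"
    using u by simp
qed

lemma antimono_on_if_has_real_derivative_nonpos:
  fixes f f' :: "real \<Rightarrow> real"
  assumes "is_interval T"
    and "\<And>t. t \<in> T \<Longrightarrow> (f has_real_derivative f' t) (at t within T)"
    and "\<And>t. t \<in> T \<Longrightarrow> f' t \<le> 0"
  shows "antimono_on T f"
proof -
  have "mono_on T (\<lambda>t. - f t)"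
    using assms by (intro mono_on_if_has_real_derivative_nonneg[of _ _ "\<lambda>t. - f' t"])
      (auto intro!: derivative_eq_intros)
  then show ?thesis
    by (auto simp: mono_on_def monotone_on_def)
qed

lemma nonneg_or_nonpos_if_square_antimono_on:
  fixes w :: "real \<Rightarrow> real"
  assumes T: "is_interval T" and cont: "continuous_on T w"
    and square: "antimono_on T (\<lambda>t. (w t)\<^sup>2)"
  shows "(\<forall>t\<in>T. 0 \<le> w t) \<or> (\<forall>t\<in>T. w t \<le> 0)"
proof -
  have False if st: "s \<in> T" "t \<in> T" "w s < 0" "0 < w t" for s t
  proof -
    define a b where "a = min s t" and "b = max s t"
    have ab: "a \<in> T" "b \<in> T" "s \<in> {a..b}" "t \<in> {a..b}"
      using st(1,2) by (simp_all add: a_def b_def min_def max_def)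
    have sub: "{a..b} \<subseteq> T"
      by (rule atLeastAtMost_subset_if_is_interval[OF T ab(1,2)])
    have image: "is_interval (w ` {a..b})"
      using connected_continuous_image[OF continuous_on_subset[OF cont sub]]
      by (simp add: is_interval_connected_1)
    have "0 \<in> w ` {a..b}"
      by (rule mem_is_interval_1_I[OF image imageI[OF ab(3)] imageI[OF ab(4)]])
        (use st(3,4) in simp_all)
    then obtain r where r: "r \<in> {a..b}" "w r = 0"
      by (auto elim: imageE)
    have "r \<in> T"
      using r(1) sub by blast
    then have "(w b)\<^sup>2 \<le> (w r)\<^sup>2"
      using monotone_onD[OF square _ ab(2)] r(1) by simp
    then have "w b = 0"
      using r(2) by simp
    then show False
      using st(3,4) by (simp add: b_def max_def split: if_splits)
  qed
  then show ?thesis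
    by (meson not_le)
qed

lemma nonneg_or_nonpos_if_dissipative:
  fixes w w' :: "real \<Rightarrow> real"
  assumes T: "is_interval T"
    and deriv: "\<And>t. t \<in> T \<Longrightarrow> (w has_real_derivative w' t) (at t within T)"
    and dissipative: "\<And>t. t \<in> T \<Longrightarrow> w t * w' t \<le> 0"
  shows "(\<forall>t\<in>T. 0 \<le> w t) \<or> (\<forall>t\<in>T. w t \<le> 0)"
proof (rule nonneg_or_nonpos_if_square_antimono_on[OF T])
  show "continuous_on T w"
    using deriv by (auto simp: continuous_on_eq_continuous_within intro: DERIV_continuous)
  show "antimono_on T (\<lambda>t. (w t)\<^sup>2)"
    using deriv dissipative
    by (intro antimono_on_if_has_real_derivative_nonpos[OF T, of _ "\<lambda>t. 2 * (w t * w' t)"])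
      (auto intro!: derivative_eq_intros)
qed

lemma relaxation_cross_term_has_derivative:
  fixes f g :: "real \<Rightarrow> real"
  assumes "(f has_real_derivative k * (a - f t)) (at t within T)"
    and "(g has_real_derivative k * (b - g t)) (at t within T)"
  shows "((\<lambda>s. a * g s - b * f s) has_real_derivative - k * (a * g t - b * f t)) (at t within T)"
  using assms by (auto intro!: derivative_eq_intros simp: algebra_simps)

lemma relaxation_ratio_has_derivative:
  fixes f g :: "real \<Rightarrow> real"
  assumes "(f has_real_derivative k * (a - f t)) (at t within T)"
    and "(g has_real_derivative k * (b - g t)) (at t within T)"
    and "g t \<noteq> 0"
  shows "((\<lambda>s. f s / g s) has_real_derivative k * (a * g t - b * f t) / (g t)\<^sup>2) (at t within T)"
  using assms by (auto intro!: derivative_eq_intros simp: algebra_simps power2_eq_square)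

theorem lemma4:
  fixes J :: nat
    and T :: "real set"
    and x :: "real \<Rightarrow> nat \<Rightarrow> real"
    and gamma nu0 :: "(nat \<Rightarrow> real) \<Rightarrow> real"
    and xhat :: "nat \<Rightarrow> real"
    and j1 j2 :: nat
  assumes T_interval: "is_interval T"
    and gamma_pos: "\<And>y. gamma y > 0"
    and nu0_pos: "\<And>y. nu0 y > 0"
    and ode: "\<And>j t. j \<in> {1..J} \<Longrightarrow> t \<in> T \<Longrightarrow>
               ((\<lambda>s. x s j) has_real_derivative
                  gamma (x t) * nu0 (x t) * (xhat j - x t j)) (at t within T)"
    and j1: "j1 \<in> {1..J}" and j2: "j2 \<in> {1..J}"
    and nonzero: "\<And>t. t \<in> T \<Longrightarrow> x t j2 \<noteq> 0"
  shows "mono_on T (density x j1 j2) \<or> antimono_on T (density x j1 j2)"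
proof -
  define k where "k t = gamma (x t) * nu0 (x t)" for t
  define w where "w t = xhat j1 * x t j2 - xhat j2 * x t j1" for t
  have k_pos: "k t > 0" for t
    using gamma_pos nu0_pos by (simp add: k_def)
  have x_deriv: "((\<lambda>s. x s j) has_real_derivative k t * (xhat j - x t j)) (at t within T)"
    if "j \<in> {1..J}" "t \<in> T" for j t
    using ode[OF that] by (simp add: k_def)
  have w_deriv: "(w has_real_derivative - k t * w t) (at t within T)" if "t \<in> T" for t
    unfolding w_def[abs_def]
    using x_deriv[OF j1 that] x_deriv[OF j2 that] by (rule relaxation_cross_term_has_derivative)
  have density_deriv:
    "(density x j1 j2 has_real_derivative k t * w t / (x t j2)\<^sup>2) (at t within T)"
    if "t \<in> T" for t
    unfolding density_def[abs_def] w_def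
    using x_deriv[OF j1 that] x_deriv[OF j2 that] nonzero[OF that]
    by (rule relaxation_ratio_has_derivative)
  have "w t * (- k t * w t) \<le> 0" for t
    using k_pos[of t] by (simp add: mult.left_commute[of "w t"] flip: power2_eq_square)
  then consider "\<forall>t\<in>T. 0 \<le> w t" | "\<forall>t\<in>T. w t \<le> 0"
    using nonneg_or_nonpos_if_dissipative[OF T_interval w_deriv] by blast
  then show ?thesis
  proof cases
    case 1
    have "mono_on T (density x j1 j2)"
    proof (rule mono_on_if_has_real_derivative_nonneg[OF T_interval density_deriv])
      show "0 \<le> k t * w t / (x t j2)\<^sup>2" if "t \<in> T" for t
        using 1 k_pos[of t] that by (simp add: divide_nonneg_nonneg)
    qed
    then show ?thesis ..
  next
    case 2
    have "antimono_on T (density x j1 j2)"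
    proof (rule antimono_on_if_has_real_derivative_nonpos[OF T_interval density_deriv])
      show "k t * w t / (x t j2)\<^sup>2 \<le> 0" if "t \<in> T" for t
        using 2 k_pos[of t] that by (simp add: divide_nonpos_nonneg mult_nonneg_nonpos)
    qed
    then show ?thesis ..
  qed
qed

end
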